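(* Let ${\bf Q}$ be an orthogonal projection on ${\cal H}$, let $s_1,s_2,s_3\in\mathbb{C}$ with $s_1^2+s_2^2+s_3^2=1$ and $s_1\ne0$, let $z\in\mathbb{C}\setminus\{0\}$, and put $\underline z=s_1^2z+s_2^2$, assumed nonzero. On ${\cal H}^3$ let $\underline{\bf Q}$ have block entries $\underline{\bf Q}_{ij}=s_is_j{\bf Q}$ and let $\underline\Gamma=\mathrm{diag}(\Gamma,{\bf I},0)$. Let ${\bf E},{\bf h}\in{\cal H}$ with $\Gamma{\bf E}={\bf E}$, $\Gamma{\bf h}={\bf h}$. Then $$({\bf I}-\Gamma{\bf Q}/z){\bf E}={\bf h}$$ holds if and only if there exists ${\bf E}_1\in{\cal H}$ such that $\underline{\bf E}=({\bf E},{\bf E}_1,0)$ satisfies $$\underline\Gamma({\bf I}-\underline{\bf Q}/\underline z)\underline{\bf E}=({\bf h},0,0);$$ in that case necessarily ${\bf E}_1=s_2{\bf Q}{\bf E}/(s_1z)$. In particular, whenever the corresponding inverses exist on the ranges of $\Gamma$ and $\underline\Gamma$, $[{\bf I}-\Gamma{\bf Q}/z]^{-1}{\bf h}=\underline{\bf G}^\dagger[{\bf I}-\underline\Gamma\underline{\bf Q}/\underline z]^{-1}\underline{\bf G}{\bf h}$, where $\underline{\bf G}{\bf h}=({\bf h},0,0)$ and $\underline{\bf G}^\dagger({\bf a},{\bf b},{\bf c})={\bf a}$.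
   Context: ${\cal H}$ is a complex Hilbert space and $\Gamma$ is an orthogonal projection on ${\cal H}$. ${\cal H}^3$ carries the direct-sum Hilbert structure. *)

theory Defs
  imports Complex_Main "HOL-Library.Product_Plus"
begin

text \<open>Complex Hilbert spaces are not in the distribution; we axiomatise them as a
  type class: complex vector space with a (physics-convention) inner product,
  linear in the second argument, Hermitian, positive definite, and complete
  with respect to the induced norm.\<close>

class complex_hilbert = ab_group_add +
  fixes scaleC :: "complex \<Rightarrow> 'a \<Rightarrow> 'a" (infixr \<open>*\<^sub>C\<close> 75)
    and cinner :: "'a \<Rightarrow> 'a \<Rightarrow> complex"
  assumes scaleC_add_right: "a *\<^sub>C (x + y) = a *\<^sub>C x + a *\<^sub>C y"
    and scaleC_add_left: "(a + b) *\<^sub>C x = a *\<^sub>C x + b *\<^sub>C x"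
    and scaleC_scaleC: "a *\<^sub>C (b *\<^sub>C x) = (a * b) *\<^sub>C x"
    and scaleC_one: "1 *\<^sub>C x = x"
    and cinner_add_right: "cinner x (y + z) = cinner x y + cinner x z"
    and cinner_scaleC_right: "cinner x (a *\<^sub>C y) = a * cinner x y"
    and cinner_cnj: "cinner y x = cnj (cinner x y)"
    and cinner_pos: "x \<noteq> 0 \<Longrightarrow> Re (cinner x x) > 0"
    and cinner_complete:
      "(\<forall>e>0. \<exists>N::nat. \<forall>m\<ge>N. \<forall>n\<ge>N. sqrt (Re (cinner (X m - X n) (X m - X n))) < e)
       \<Longrightarrow> (\<exists>L. \<forall>e>0. \<exists>N::nat. \<forall>n\<ge>N. sqrt (Re (cinner (X n - L) (X n - L))) < e)"

definition clinear :: "('a::complex_hilbert \<Rightarrow> 'a) \<Rightarrow> bool" where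
  "clinear f \<longleftrightarrow> (\<forall>x y. f (x + y) = f x + f y) \<and> (\<forall>a x. f (a *\<^sub>C x) = a *\<^sub>C f x)"

definition orth_proj :: "('a::complex_hilbert \<Rightarrow> 'a) \<Rightarrow> bool" where
  "orth_proj P \<longleftrightarrow> clinear P \<and> (\<forall>x. P (P x) = P x) \<and>
     (\<forall>x y. cinner (P x) y = cinner x (P y))"

definition blockQ :: "complex \<Rightarrow> complex \<Rightarrow> complex \<Rightarrow> ('a::complex_hilbert \<Rightarrow> 'a)
    \<Rightarrow> 'a \<times> 'a \<times> 'a \<Rightarrow> 'a \<times> 'a \<times> 'a" where
  "blockQ s1 s2 s3 Q = (\<lambda>(a, b, c).
     ((s1*s1) *\<^sub>C Q a + (s1*s2) *\<^sub>C Q b + (s1*s3) *\<^sub>C Q c,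
      (s2*s1) *\<^sub>C Q a + (s2*s2) *\<^sub>C Q b + (s2*s3) *\<^sub>C Q c,
      (s3*s1) *\<^sub>C Q a + (s3*s2) *\<^sub>C Q b + (s3*s3) *\<^sub>C Q c))"

definition blockGamma :: "('a::complex_hilbert \<Rightarrow> 'a) \<Rightarrow> 'a \<times> 'a \<times> 'a \<Rightarrow> 'a \<times> 'a \<times> 'a" where
  "blockGamma \<Gamma> = (\<lambda>(a, b, c). (\<Gamma> a, b, 0))"

definition scaleC3 :: "complex \<Rightarrow> 'a::complex_hilbert \<times> 'a \<times> 'a \<Rightarrow> 'a \<times> 'a \<times> 'a" where
  "scaleC3 t = (\<lambda>(a, b, c). (t *\<^sub>C a, t *\<^sub>C b, t *\<^sub>C c))"

end

theory Submission
  imports Defs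
begin

text \<open>Writing out the block equation componentwise, the third row is void and the second row
  reads \<open>E\<^sub>1 = c s\<^sub>2 (s\<^sub>1 Q E + s\<^sub>2 Q E\<^sub>1)\<close> with \<open>c = 1/(s\<^sub>1\<^sup>2 z + s\<^sub>2\<^sup>2)\<close>. Applying the
  idempotent \<open>Q\<close> solves it uniquely: \<open>E\<^sub>1 = s\<^sub>2 Q E / (s\<^sub>1 z)\<close>. Substituting this into the
  first row, the coefficient of \<open>Q E\<close> collapses to \<open>c (s\<^sub>1\<^sup>2 + s\<^sub>2\<^sup>2/z) = 1/z\<close>, which is the
  original equation.\<close>

context complex_hilbert
begin

lemma scaleC_zero_right [simp]: "a *\<^sub>C 0 = 0"
  using scaleC_add_right [of a 0 0] by simp

lemma scaleC_diff_left: "(a - b) *\<^sub>C x = a *\<^sub>C x - b *\<^sub>C x"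
  using scaleC_add_left [of "a - b" b x] by (simp add: eq_diff_eq)

lemma scaleC_add_scaleC: "c *\<^sub>C (a *\<^sub>C x + b *\<^sub>C x) = (c * (a + b)) *\<^sub>C x"
  by (simp add: scaleC_add_left [symmetric] scaleC_scaleC)

end

lemma clinear_zero: "clinear f \<Longrightarrow> f 0 = 0"
  unfolding clinear_def by (metis add_cancel_right_right)

lemma clinear_add: "clinear f \<Longrightarrow> f (x + y) = f x + f y"
  unfolding clinear_def by blast

lemma clinear_scaleC: "clinear f \<Longrightarrow> f (a *\<^sub>C x) = a *\<^sub>C f x"
  unfolding clinear_def by blast

lemma clinear_diff: "clinear f \<Longrightarrow> f (x - y) = f x - f y"
  using clinear_add [of f "x - y" y] by (simp add: eq_diff_eq)

lemma idempotent_fixed_point_iff: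
  fixes Q :: "'a::complex_hilbert \<Rightarrow> 'a"
  assumes lin: "clinear Q" and idem: "\<And>x. Q (Q x) = Q x" and "b \<noteq> 1"
  shows "x = a *\<^sub>C Q y + b *\<^sub>C Q x \<longleftrightarrow> x = (a / (1 - b)) *\<^sub>C Q y"
proof -
  define t where "t = a / (1 - b)"
  have t: "a + b * t = t"
    using \<open>b \<noteq> 1\<close> by (simp add: t_def field_simps)
  have combine: "a *\<^sub>C Q y + b *\<^sub>C (t *\<^sub>C Q y) = t *\<^sub>C Q y"
    by (simp add: scaleC_scaleC scaleC_add_left [symmetric] t)
  show ?thesis
    unfolding t_def [symmetric]
  proof
    assume x: "x = a *\<^sub>C Q y + b *\<^sub>C Q x"
    then have "Q x = a *\<^sub>C Q y + b *\<^sub>C Q x"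
      by (metis lin idem clinear_add clinear_scaleC)
    then have "Q x - b *\<^sub>C Q x = a *\<^sub>C Q y"
      by (metis add_diff_cancel_right')
    then have "(1 - b) *\<^sub>C Q x = a *\<^sub>C Q y"
      by (simp add: scaleC_diff_left scaleC_one)
    then have "inverse (1 - b) *\<^sub>C ((1 - b) *\<^sub>C Q x) = t *\<^sub>C Q y"
      by (simp add: scaleC_scaleC t_def divide_inverse mult.commute)
    then have Qx: "Q x = t *\<^sub>C Q y"
      using \<open>b \<noteq> 1\<close> by (simp add: scaleC_scaleC scaleC_one)
    show "x = t *\<^sub>C Q y"
      using x [unfolded Qx] combine by simp
  next
    assume x: "x = t *\<^sub>C Q y"
    then have Qx: "Q x = t *\<^sub>C Q y"
      by (simp add: lin idem clinear_scaleC)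
    show "x = a *\<^sub>C Q y + b *\<^sub>C Q x"
      unfolding Qx using x combine by simp
  qed
qed

lemma blockGamma_blockQ_components:
  assumes "clinear Q"
  shows "blockGamma \<Gamma> ((E, E\<^sub>1, 0) - scaleC3 c (blockQ s1 s2 s3 Q (E, E\<^sub>1, 0))) =
           (\<Gamma> (E - c *\<^sub>C ((s1 * s1) *\<^sub>C Q E + (s1 * s2) *\<^sub>C Q E\<^sub>1)),
            E\<^sub>1 - c *\<^sub>C ((s2 * s1) *\<^sub>C Q E + (s2 * s2) *\<^sub>C Q E\<^sub>1), 0)"
  using clinear_zero [OF assms] by (simp add: blockGamma_def blockQ_def scaleC3_def)

lemma blockGamma_diff_scaleC3:
  assumes "clinear \<Gamma>"
  shows "blockGamma \<Gamma> (X - scaleC3 c Y) = blockGamma \<Gamma> X - scaleC3 c (blockGamma \<Gamma> Y)"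
  by (cases X; cases Y)
    (simp add: blockGamma_def scaleC3_def clinear_diff [OF assms] clinear_scaleC [OF assms])

lemma blockGamma_idem_on_range:
  assumes "\<And>x. \<Gamma> (\<Gamma> x) = \<Gamma> x" and "X \<in> range (blockGamma \<Gamma>)"
  shows "blockGamma \<Gamma> X = X"
  using assms by (auto simp: blockGamma_def)

lemma block_equation_iff:
  fixes \<Gamma> Q :: "'a::complex_hilbert \<Rightarrow> 'a"
  assumes lin\<Gamma>: "clinear \<Gamma>" and linQ: "clinear Q" and idemQ: "\<And>x. Q (Q x) = Q x"
    and "\<Gamma> E = E" and "s1 \<noteq> 0" and "z \<noteq> 0" and "s1^2 * z + s2^2 \<noteq> 0"
  shows "blockGamma \<Gamma> ((E, E\<^sub>1, 0) - scaleC3 (inverse (s1^2 * z + s2^2))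
             (blockQ s1 s2 s3 Q (E, E\<^sub>1, 0))) = (h, 0, 0)
         \<longleftrightarrow> E - inverse z *\<^sub>C \<Gamma> (Q E) = h \<and> E\<^sub>1 = (s2 / (s1 * z)) *\<^sub>C Q E"
proof -
  define c where "c = inverse (s1^2 * z + s2^2)"
  define k where "k = s2 / (s1 * z)"
  have "c \<noteq> 0"
    using assms(7) by (simp add: c_def)
  have denominator: "1 - c * (s2 * s2) = c * (s1^2 * z)"
    using assms(7) by (simp add: c_def field_simps power2_eq_square)
  then have "c * (s2 * s2) \<noteq> 1"
    using \<open>c \<noteq> 0\<close> assms(5,6) by auto
  have ratio: "c * (s2 * s1) / (1 - c * (s2 * s2)) = k"
    unfolding denominator k_def using \<open>c \<noteq> 0\<close> assms(5,6)
    by (simp add: field_simps power2_eq_square)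
  have second_row: "E\<^sub>1 - c *\<^sub>C ((s2 * s1) *\<^sub>C Q E + (s2 * s2) *\<^sub>C Q E\<^sub>1) = 0 \<longleftrightarrow> E\<^sub>1 = k *\<^sub>C Q E"
    using idempotent_fixed_point_iff [OF linQ idemQ \<open>c * (s2 * s2) \<noteq> 1\<close>, of E\<^sub>1 "c * (s2 * s1)" E]
    by (simp add: ratio scaleC_add_right scaleC_scaleC)
  have "s1 * s1 + s1 * s2 * k = (s1^2 * z + s2^2) / z"
    using assms(5,6) by (simp add: k_def field_simps power2_eq_square)
  then have "c * (s1 * s1 + s1 * s2 * k) = inverse z"
    using assms(7) by (simp add: c_def divide_inverse)
  then have first_row: "\<Gamma> (E - c *\<^sub>C ((s1 * s1) *\<^sub>C Q E + (s1 * s2) *\<^sub>C Q E\<^sub>1)) = E - inverse z *\<^sub>C \<Gamma> (Q E)"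
    if "E\<^sub>1 = k *\<^sub>C Q E"
    using that \<open>\<Gamma> E = E\<close> lin\<Gamma>
    by (simp add: linQ idemQ clinear_scaleC clinear_diff scaleC_scaleC scaleC_add_scaleC)
  show ?thesis
    unfolding blockGamma_blockQ_components [OF linQ] c_def [symmetric] k_def [symmetric]
    using first_row second_row by auto
qed

lemma inverse_block_resolvent:
  fixes \<Gamma> Q :: "'a::complex_hilbert \<Rightarrow> 'a"
  assumes lin\<Gamma>: "clinear \<Gamma>" and idem\<Gamma>: "\<And>x. \<Gamma> (\<Gamma> x) = \<Gamma> x"
    and linQ: "clinear Q" and idemQ: "\<And>x. Q (Q x) = Q x"
    and "s1 \<noteq> 0" and "z \<noteq> 0" and "s1^2 * z + s2^2 \<noteq> 0"
    and bij: "bij_betw (\<lambda>X. X - scaleC3 (inverse (s1^2 * z + s2^2))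
                          (blockGamma \<Gamma> (blockQ s1 s2 s3 Q X)))
                (range (blockGamma \<Gamma>)) (range (blockGamma \<Gamma>))"
    and "x \<in> range \<Gamma>" and "x - inverse z *\<^sub>C \<Gamma> (Q x) = h"
  shows "inv_into (range (blockGamma \<Gamma>))
           (\<lambda>X. X - scaleC3 (inverse (s1^2 * z + s2^2)) (blockGamma \<Gamma> (blockQ s1 s2 s3 Q X)))
           (h, 0, 0) = (x, (s2 / (s1 * z)) *\<^sub>C Q x, 0)"
proof -
  define c where "c = inverse (s1^2 * z + s2^2)"
  define g where "g = (\<lambda>X. X - scaleC3 c (blockGamma \<Gamma> (blockQ s1 s2 s3 Q X)))"
  define X where "X = (x, (s2 / (s1 * z)) *\<^sub>C Q x, 0 :: 'a)"
  have "\<Gamma> x = x"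
    using \<open>x \<in> range \<Gamma>\<close> idem\<Gamma> by auto
  then have fixed: "blockGamma \<Gamma> X = X"
    by (simp add: X_def blockGamma_def)
  then have "X \<in> range (blockGamma \<Gamma>)"
    by (metis rangeI)
  have "g X = blockGamma \<Gamma> (X - scaleC3 c (blockQ s1 s2 s3 Q X))"
    by (simp add: g_def blockGamma_diff_scaleC3 [OF lin\<Gamma>] fixed)
  also have "\<dots> = (h, 0, 0)"
    using assms(10) by (simp add: X_def c_def block_equation_iff [OF lin\<Gamma> linQ idemQ \<open>\<Gamma> x = x\<close> assms(5-7)])
  finally have "inv_into (range (blockGamma \<Gamma>)) g (h, 0, 0) = X"
    using bij \<open>X \<in> range (blockGamma \<Gamma>)\<close>
    unfolding g_def c_def by (simp add: bij_betw_def inv_into_f_eq)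
  then show ?thesis
    unfolding g_def c_def X_def .
qed

lemma inv_into_resolvent_eq_fst_block:
  fixes \<Gamma> Q :: "'a::complex_hilbert \<Rightarrow> 'a"
  assumes lin\<Gamma>: "clinear \<Gamma>" and idem\<Gamma>: "\<And>x. \<Gamma> (\<Gamma> x) = \<Gamma> x"
    and linQ: "clinear Q" and idemQ: "\<And>x. Q (Q x) = Q x"
    and "s1 \<noteq> 0" and "z \<noteq> 0" and "s1^2 * z + s2^2 \<noteq> 0"
    and bij: "bij_betw (\<lambda>x. x - inverse z *\<^sub>C \<Gamma> (Q x)) (range \<Gamma>) (range \<Gamma>)"
    and bij_block: "bij_betw (\<lambda>X. X - scaleC3 (inverse (s1^2 * z + s2^2))
                          (blockGamma \<Gamma> (blockQ s1 s2 s3 Q X)))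
                (range (blockGamma \<Gamma>)) (range (blockGamma \<Gamma>))"
    and "\<Gamma> h = h"
  shows "inv_into (range \<Gamma>) (\<lambda>x. x - inverse z *\<^sub>C \<Gamma> (Q x)) h
         = fst (inv_into (range (blockGamma \<Gamma>))
              (\<lambda>X. X - scaleC3 (inverse (s1^2 * z + s2^2))
                    (blockGamma \<Gamma> (blockQ s1 s2 s3 Q X))) (h, 0, 0))"
proof -
  define f where "f = (\<lambda>x. x - inverse z *\<^sub>C \<Gamma> (Q x))"
  define x where "x = inv_into (range \<Gamma>) f h"
  have "h \<in> f ` range \<Gamma>"
    using bij \<open>\<Gamma> h = h\<close> unfolding bij_betw_def f_def by (metis rangeI)
  then have "x \<in> range \<Gamma>" and "f x = h"
    unfolding x_def by (simp_all add: inv_into_into f_inv_into_f)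
  then have "x \<in> range \<Gamma>" and "x - inverse z *\<^sub>C \<Gamma> (Q x) = h"
    by (simp_all add: f_def)
  from inverse_block_resolvent [OF lin\<Gamma> idem\<Gamma> linQ idemQ assms(5-7) bij_block this]
  show ?thesis
    by (simp add: x_def f_def)
qed

theorem mainTheorem11:
  fixes \<Gamma> Q :: "'a::complex_hilbert \<Rightarrow> 'a"
    and s1 s2 s3 z :: complex
    and E h :: 'a
  assumes "orth_proj \<Gamma>" and "orth_proj Q"
    and "s1^2 + s2^2 + s3^2 = 1" and "s1 \<noteq> 0"
    and "z \<noteq> 0" and "s1^2 * z + s2^2 \<noteq> 0"
    and "\<Gamma> E = E" and "\<Gamma> h = h"
  shows "(E - inverse z *\<^sub>C \<Gamma> (Q E) = h \<longleftrightarrow>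
           (\<exists>E1. blockGamma \<Gamma> ((E, E1, 0) - scaleC3 (inverse (s1^2 * z + s2^2))
                     (blockQ s1 s2 s3 Q (E, E1, 0))) = (h, 0, 0)))
      \<and> (\<forall>E1. blockGamma \<Gamma> ((E, E1, 0) - scaleC3 (inverse (s1^2 * z + s2^2))
                     (blockQ s1 s2 s3 Q (E, E1, 0))) = (h, 0, 0)
             \<longrightarrow> E1 = (s2 / (s1 * z)) *\<^sub>C Q E)
      \<and> ((bij_betw (\<lambda>x. x - inverse z *\<^sub>C \<Gamma> (Q x)) (range \<Gamma>) (range \<Gamma>) \<and>
          bij_betw (\<lambda>X. X - scaleC3 (inverse (s1^2 * z + s2^2))
                        (blockGamma \<Gamma> (blockQ s1 s2 s3 Q X)))
                   (range (blockGamma \<Gamma>)) (range (blockGamma \<Gamma>)))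
         \<longrightarrow> inv_into (range \<Gamma>) (\<lambda>x. x - inverse z *\<^sub>C \<Gamma> (Q x)) h
             = fst (inv_into (range (blockGamma \<Gamma>))
                  (\<lambda>X. X - scaleC3 (inverse (s1^2 * z + s2^2))
                        (blockGamma \<Gamma> (blockQ s1 s2 s3 Q X))) (h, 0, 0)))"
proof -
  have lin\<Gamma>: "clinear \<Gamma>" and idem\<Gamma>: "\<And>x. \<Gamma> (\<Gamma> x) = \<Gamma> x"
    and linQ: "clinear Q" and idemQ: "\<And>x. Q (Q x) = Q x"
    using assms(1,2) unfolding orth_proj_def by auto
  show ?thesis
    using inv_into_resolvent_eq_fst_block [OF lin\<Gamma> idem\<Gamma> linQ idemQ assms(4-6) _ _ \<open>\<Gamma> h = h\<close>]
    by (simp add: block_equation_iff [OF lin\<Gamma> linQ idemQ \<open>\<Gamma> E = E\<close> assms(4-6)])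
qed

end
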